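(* Let $G$ be a solvable group equipped with a purely positive length function, and let $A$ be a maximal abelian normal subgroup of $G$. Assume that $A$ is torsion-free. Then $C_{G}(A)=A$, where $C_G(A)$ is the centralizer of $A$ in $G$.
   Context: A length function on a group $G$ is a function $l:G\to[0,\infty)$ such that $l(g^{n})=|n|\,l(g)$ for all $g\in G,n\in\mathbb{Z}$; $l(hgh^{-1})=l(g)$ for all $g,h$; and $l(ab)\leq l(a)+l(b)$ whenever $a,b$ commute. It is purely positive if $l(g)>0$ for every element of infinite order. *)

theory Defs
  imports "HOL-Algebra.Algebra"
begin

definition length_function :: "('a, 'b) monoid_scheme \<Rightarrow> ('a \<Rightarrow> real) \<Rightarrow> bool" where
  "length_function G l \<longleftrightarrow>
     (\<forall>g\<in>carrier G. l g \<ge> 0) \<and>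
     (\<forall>g\<in>carrier G. \<forall>n::int. l (g [^]\<^bsub>G\<^esub> n) = \<bar>real_of_int n\<bar> * l g) \<and>
     (\<forall>g\<in>carrier G. \<forall>h\<in>carrier G. l (h \<otimes>\<^bsub>G\<^esub> g \<otimes>\<^bsub>G\<^esub> inv\<^bsub>G\<^esub> h) = l g) \<and>
     (\<forall>a\<in>carrier G. \<forall>b\<in>carrier G. a \<otimes>\<^bsub>G\<^esub> b = b \<otimes>\<^bsub>G\<^esub> a \<longrightarrow>
          l (a \<otimes>\<^bsub>G\<^esub> b) \<le> l a + l b)"

definition infinite_order :: "('a, 'b) monoid_scheme \<Rightarrow> 'a \<Rightarrow> bool" where
  "infinite_order G g \<longleftrightarrow> (\<forall>n::nat. n > 0 \<longrightarrow> g [^]\<^bsub>G\<^esub> n \<noteq> \<one>\<^bsub>G\<^esub>)"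

definition purely_positive :: "('a, 'b) monoid_scheme \<Rightarrow> ('a \<Rightarrow> real) \<Rightarrow> bool" where
  "purely_positive G l \<longleftrightarrow> (\<forall>g\<in>carrier G. infinite_order G g \<longrightarrow> l g > 0)"

definition torsion_free_subset :: "('a, 'b) monoid_scheme \<Rightarrow> 'a set \<Rightarrow> bool" where
  "torsion_free_subset G A \<longleftrightarrow> (\<forall>a\<in>A. a \<noteq> \<one>\<^bsub>G\<^esub> \<longrightarrow> infinite_order G a)"

definition abelian_normal_subgroup :: "('a, 'b) monoid_scheme \<Rightarrow> 'a set \<Rightarrow> bool" where
  "abelian_normal_subgroup G A \<longleftrightarrow> A \<lhd> G \<and> comm_group (G\<lparr>carrier := A\<rparr>)"

definition maximal_abelian_normal_subgroup :: "('a, 'b) monoid_scheme \<Rightarrow> 'a set \<Rightarrow> bool" where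
  "maximal_abelian_normal_subgroup G A \<longleftrightarrow> abelian_normal_subgroup G A \<and>
     (\<forall>B. abelian_normal_subgroup G B \<and> A \<subseteq> B \<longrightarrow> B = A)"

definition centralizer :: "('a, 'b) monoid_scheme \<Rightarrow> 'a set \<Rightarrow> 'a set" where
  "centralizer G A = {g \<in> carrier G. \<forall>a\<in>A. g \<otimes>\<^bsub>G\<^esub> a = a \<otimes>\<^bsub>G\<^esub> g}"

end

(* Let C be the centralizer of A; it is a normal subgroup containing A. If x, y in C have their
   commutator c in A, then c commutes with x and y, so x^n y x^-n = c^n y and
   n l(c) = l(c^n) <= l(c^n y) + l(y^-1) = 2 l(y) for every n. Hence l(c) = 0, and as A is
   torsion-free and l purely positive, c = 1. Now descend the derived series
   G = D_0 \<supseteq> D_1 \<supseteq> ... \<supseteq> D_n = 1: if D_(k+1) meets C inside A, then the commutators of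
   D_k \<inter> C lie in A, so D_k \<inter> C is abelian; it is normal and centralizes A, hence
   A (D_k \<inter> C) is an abelian normal subgroup and maximality gives D_k \<inter> C \<subseteq> A.
   For k = 0 this says C \<subseteq> A. *)

theory Submission
  imports Defs
begin

lemma (in group) centralizer_subgroup:
  assumes "A \<subseteq> carrier G"
  shows "subgroup (centralizer G A) G"
proof (rule subgroupI)
  show "centralizer G A \<subseteq> carrier G" "centralizer G A \<noteq> {}"
    using assms by (auto simp: centralizer_def intro!: exI[of _ \<one>])
next
  fix g assume g: "g \<in> centralizer G A"
  then have gG: "g \<in> carrier G" by (simp add: centralizer_def)
  have "inv g \<otimes> a = a \<otimes> inv g" if "a \<in> A" for a
  proof -
    have aG: "a \<in> carrier G" using that assms by blast
    have "inv g \<otimes> a = inv g \<otimes> (a \<otimes> g) \<otimes> inv g" using gG aG by (simp add: m_assoc)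
    also have "\<dots> = inv g \<otimes> (g \<otimes> a) \<otimes> inv g" using g that by (simp add: centralizer_def)
    also have "\<dots> = a \<otimes> inv g" using gG aG by (simp add: m_assoc[symmetric])
    finally show ?thesis .
  qed
  then show "inv g \<in> centralizer G A" using gG by (simp add: centralizer_def)
next
  fix g h assume g: "g \<in> centralizer G A" and h: "h \<in> centralizer G A"
  then have gG: "g \<in> carrier G" and hG: "h \<in> carrier G" by (simp_all add: centralizer_def)
  have "g \<otimes> h \<otimes> a = a \<otimes> (g \<otimes> h)" if "a \<in> A" for a
  proof -
    have aG: "a \<in> carrier G" using that assms by blast
    have "g \<otimes> h \<otimes> a = g \<otimes> (a \<otimes> h)" using g h that gG hG aG by (simp add: centralizer_def m_assoc)
    also have "\<dots> = a \<otimes> (g \<otimes> h)" using g that gG hG aG by (simp add: centralizer_def m_assoc[symmetric])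
    finally show ?thesis .
  qed
  then show "g \<otimes> h \<in> centralizer G A" using gG hG by (simp add: centralizer_def)
qed

lemma (in group) centralizer_normal:
  assumes "A \<lhd> G"
  shows "centralizer G A \<lhd> G"
proof -
  interpret A: normal A G by fact
  have "x \<otimes> g \<otimes> inv x \<in> centralizer G A" if x: "x \<in> carrier G" and g: "g \<in> centralizer G A" for x g
  proof -
    have gG: "g \<in> carrier G" using g by (simp add: centralizer_def)
    have "x \<otimes> g \<otimes> inv x \<otimes> a = a \<otimes> (x \<otimes> g \<otimes> inv x)" if a: "a \<in> A" for a
    proof -
      have aG: "a \<in> carrier G" using a A.subset by blast
      have a': "inv x \<otimes> a \<otimes> x \<in> A" using A.inv_op_closed1[OF x a] .
      have "x \<otimes> g \<otimes> inv x \<otimes> a = x \<otimes> (g \<otimes> (inv x \<otimes> a \<otimes> x)) \<otimes> inv x"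
        using x gG aG by (simp add: m_assoc)
      also have "\<dots> = x \<otimes> ((inv x \<otimes> a \<otimes> x) \<otimes> g) \<otimes> inv x"
        using g a' by (simp add: centralizer_def)
      also have "\<dots> = a \<otimes> (x \<otimes> g \<otimes> inv x)"
        using x gG aG by (simp add: m_assoc[symmetric])
      finally show ?thesis .
    qed
    then show ?thesis using x gG by (simp add: centralizer_def)
  qed
  then show ?thesis
    using centralizer_subgroup[OF A.subset] by (simp add: normal_inv_iff)
qed

lemma (in group) subgroup_comm_group_iff:
  assumes "subgroup A G"
  shows "comm_group (G\<lparr>carrier := A\<rparr>) \<longleftrightarrow> A \<subseteq> centralizer G A"
proof
  assume "comm_group (G\<lparr>carrier := A\<rparr>)"
  then interpret A: comm_group "G\<lparr>carrier := A\<rparr>" .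
  show "A \<subseteq> centralizer G A"
    using A.m_comm subgroup.subset[OF assms] by (auto simp: centralizer_def)
next
  assume "A \<subseteq> centralizer G A"
  then show "comm_group (G\<lparr>carrier := A\<rparr>)"
    by (intro group.group_comm_groupI subgroup.subgroup_is_group[OF assms is_group])
      (auto simp: centralizer_def)
qed

lemma (in group) set_mult_subset_centralizer:
  assumes "A \<subseteq> centralizer G A" "B \<subseteq> centralizer G B" "B \<subseteq> centralizer G A"
  shows "A <#> B \<subseteq> centralizer G (A <#> B)"
proof
  have carr: "A \<subseteq> carrier G" "B \<subseteq> carrier G"
    using assms(1,2) by (auto simp: centralizer_def)
  have commA: "a \<otimes> a' = a' \<otimes> a" if "a \<in> A" "a' \<in> A" for a a'
    using assms(1) that by (auto simp: centralizer_def)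
  have commB: "b \<otimes> b' = b' \<otimes> b" if "b \<in> B" "b' \<in> B" for b b'
    using assms(2) that by (auto simp: centralizer_def)
  have commAB: "b \<otimes> a = a \<otimes> b" if "a \<in> A" "b \<in> B" for a b
    using assms(3) that by (auto simp: centralizer_def)
  have swap: "a \<otimes> b \<otimes> (a' \<otimes> b') = a \<otimes> a' \<otimes> (b \<otimes> b')"
    if "a \<in> A" "b \<in> B" "a' \<in> A" "b' \<in> B" for a b a' b'
  proof -
    have G: "a \<in> carrier G" "b \<in> carrier G" "a' \<in> carrier G" "b' \<in> carrier G"
      using that carr by blast+
    have "a \<otimes> b \<otimes> (a' \<otimes> b') = a \<otimes> (b \<otimes> a') \<otimes> b'" using G by (simp add: m_assoc)
    also have "\<dots> = a \<otimes> (a' \<otimes> b) \<otimes> b'" using that commAB by simp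
    also have "\<dots> = a \<otimes> a' \<otimes> (b \<otimes> b')" using G by (simp add: m_assoc)
    finally show ?thesis .
  qed
  fix x assume "x \<in> A <#> B"
  then obtain a b where x: "x = a \<otimes> b" "a \<in> A" "b \<in> B" by (auto simp: set_mult_def)
  have "x \<otimes> y = y \<otimes> x" if "y \<in> A <#> B" for y
  proof -
    from that obtain a' b' where y: "y = a' \<otimes> b'" "a' \<in> A" "b' \<in> B"
      by (auto simp: set_mult_def)
    have "x \<otimes> y = a \<otimes> a' \<otimes> (b \<otimes> b')" using x y swap by simp
    also have "\<dots> = a' \<otimes> a \<otimes> (b' \<otimes> b)" using x y commA commB by simp
    also have "\<dots> = y \<otimes> x" using x y swap by simp
    finally show ?thesis .
  qed
  moreover have "x \<in> carrier G" using x carr by blast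
  ultimately show "x \<in> centralizer G (A <#> B)" by (simp add: centralizer_def)
qed

lemma (in group) maximal_abelian_normal_subgroupD:
  assumes "maximal_abelian_normal_subgroup G A"
  shows "A \<lhd> G" "A \<subseteq> centralizer G A"
  using assms normal_imp_subgroup subgroup_comm_group_iff
  unfolding maximal_abelian_normal_subgroup_def abelian_normal_subgroup_def by blast+

lemma (in group) maximal_abelian_normal_subgroup_absorbs:
  assumes A: "maximal_abelian_normal_subgroup G A"
    and B: "B \<lhd> G" "B \<subseteq> centralizer G B" "B \<subseteq> centralizer G A"
  shows "B \<subseteq> A"
proof -
  note nA = maximal_abelian_normal_subgroupD(1)[OF A]
    and abA = maximal_abelian_normal_subgroupD(2)[OF A]
  interpret AB: second_isomorphism_grp A G B
    using nA normal_imp_subgroup[OF B(1)]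
    by (simp add: second_isomorphism_grp_def second_isomorphism_grp_axioms_def)
  have "abelian_normal_subgroup G (A <#> B)"
    unfolding abelian_normal_subgroup_def
    using normal_subgroup_set_mult_closed[OF nA B(1)] AB.normal_set_mult_subgroup
      set_mult_subset_centralizer[OF abA B(2,3)] subgroup_comm_group_iff by blast
  then have "A <#> B = A"
    using A AB.H_contained_in_set_mult unfolding maximal_abelian_normal_subgroup_def by blast
  then show ?thesis using AB.S_contained_in_set_mult by blast
qed

lemma (in group) length_function_nat_pow:
  assumes "length_function G l" "g \<in> carrier G"
  shows "l (g [^] (n::nat)) = real n * l g"
  using assms int_pow_int[of G g n] unfolding length_function_def
  by (metis of_int_of_nat_eq abs_of_nat)

lemma (in group) length_function_inv:
  assumes "length_function G l" "g \<in> carrier G"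
  shows "l (inv g) = l g"
proof -
  have "inv g = g [^] (- 1 :: int)" using assms(2) by (simp add: int_pow_neg)
  then show ?thesis using assms unfolding length_function_def by simp
qed

lemma (in group) conj_by_nat_pow:
  assumes G: "x \<in> carrier G" "y \<in> carrier G" "c \<in> carrier G"
    and cx: "c \<otimes> x = x \<otimes> c" and conj: "x \<otimes> y \<otimes> inv x = c \<otimes> y"
  shows "x [^] (n::nat) \<otimes> y \<otimes> inv (x [^] n) = c [^] n \<otimes> y"
proof (induction n)
  case 0
  show ?case using G by simp
next
  case (Suc n)
  have "x [^] Suc n \<otimes> y \<otimes> inv (x [^] Suc n) = x \<otimes> (x [^] n \<otimes> y \<otimes> inv (x [^] n)) \<otimes> inv x"
    unfolding nat_pow_Suc2[OF G(1)] using G by (simp add: inv_mult_group m_assoc)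
  also have "\<dots> = x \<otimes> c [^] n \<otimes> y \<otimes> inv x"
    using G Suc.IH by (simp add: m_assoc)
  also have "\<dots> = c [^] n \<otimes> (x \<otimes> y \<otimes> inv x)"
    using G group_commutes_pow[OF cx G(3,1), of n] by (simp add: m_assoc[symmetric])
  also have "\<dots> = c [^] Suc n \<otimes> y"
    using G conj by (simp add: m_assoc)
  finally show ?case .
qed

lemma (in group) central_commutator_length_eq_0:
  assumes l: "length_function G l" and G: "x \<in> carrier G" "y \<in> carrier G"
    and central: "x \<otimes> y \<otimes> inv x \<otimes> inv y \<in> centralizer G {x, y}"
  shows "l (x \<otimes> y \<otimes> inv x \<otimes> inv y) = 0"
proof -
  define c where "c = x \<otimes> y \<otimes> inv x \<otimes> inv y"
  have cG: "c \<in> carrier G" and cx: "c \<otimes> x = x \<otimes> c" and cy: "c \<otimes> y = y \<otimes> c"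
    using central unfolding c_def centralizer_def by auto
  have conj: "x \<otimes> y \<otimes> inv x = c \<otimes> y"
    using G unfolding c_def by (simp add: m_assoc)
  have bound: "real n * l c \<le> 2 * l y" for n
  proof -
    have cnG: "c [^] n \<in> carrier G" using cG by simp
    have cny: "c [^] n \<otimes> y = y \<otimes> c [^] n" using group_commutes_pow[OF cy cG G(2)] .
    have cn: "c [^] n = (c [^] n \<otimes> y) \<otimes> inv y" using cnG G by (simp add: m_assoc)
    moreover have "inv y \<otimes> (c [^] n \<otimes> y) = c [^] n"
      using cnG G by (simp add: cny m_assoc[symmetric])
    ultimately have "l (c [^] n) \<le> l (c [^] n \<otimes> y) + l (inv y)"
      using l cnG G unfolding length_function_def by (metis inv_closed m_closed)
    also have "l (c [^] n \<otimes> y) = l y"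
      using l G cG conj_by_nat_pow[OF G cG cx conj, of n] unfolding length_function_def
      by (metis nat_pow_closed)
    finally show ?thesis using length_function_nat_pow[OF l cG] length_function_inv[OF l G(2)]
      by simp
  qed
  have "l c \<le> 0"
  proof (rule ccontr)
    assume "\<not> l c \<le> 0"
    then obtain n where "2 * l y < real n * l c" using ex_less_of_nat_mult by force
    with bound[of n] show False by simp
  qed
  then show ?thesis using l cG unfolding c_def length_function_def by force
qed

lemma (in group) commute_if_commutator_central_torsion_free:
  assumes "length_function G l" "purely_positive G l" "torsion_free_subset G T"
    and G: "x \<in> carrier G" "y \<in> carrier G"
    and c: "x \<otimes> y \<otimes> inv x \<otimes> inv y \<in> T \<inter> centralizer G {x, y}"
  shows "x \<otimes> y = y \<otimes> x"
proof -
  have "\<not> infinite_order G (x \<otimes> y \<otimes> inv x \<otimes> inv y)"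
    using assms central_commutator_length_eq_0 unfolding purely_positive_def by force
  then have "x \<otimes> y \<otimes> inv x \<otimes> inv y = \<one>"
    using assms(3) c unfolding torsion_free_subset_def by blast
  then have "x \<otimes> y \<otimes> inv x \<otimes> inv y \<otimes> y \<otimes> x = y \<otimes> x" using G by simp
  then show ?thesis using G by (simp add: m_assoc)
qed

lemma (in group) derived_series_normal: "(derived G ^^ n) (carrier G) \<lhd> G"
  by (induction n) (auto intro: derived_is_normal normal_self)

lemma (in group) Int_centralizer_subset_if_derived:
  assumes l: "length_function G l" "purely_positive G l"
    and A: "maximal_abelian_normal_subgroup G A" "torsion_free_subset G A"
    and N: "N \<lhd> G" "derived G N \<inter> centralizer G A \<subseteq> A"
  shows "N \<inter> centralizer G A \<subseteq> A"
proof -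
  let ?C = "centralizer G A" and ?H = "N \<inter> centralizer G A"
  have C: "subgroup ?C G" "?C \<lhd> G"
    using maximal_abelian_normal_subgroupD(1)[OF A(1)]
      centralizer_subgroup centralizer_normal normal_imp_subgroup subgroup.subset by blast+
  have "x \<otimes> y = y \<otimes> x" if x: "x \<in> ?H" and y: "y \<in> ?H" for x y
  proof (rule commute_if_commutator_central_torsion_free[OF l A(2)])
    show G: "x \<in> carrier G" "y \<in> carrier G" using x y by (auto simp: centralizer_def)
    let ?c = "x \<otimes> y \<otimes> inv x \<otimes> inv y"
    have "?c \<in> derived G N"
      using x y unfolding derived_def by (blast intro: generate.incl)
    moreover have "?c \<in> ?C"
      using x y C(1) by (meson IntD2 subgroup.m_closed subgroup.m_inv_closed)
    ultimately have "?c \<in> A" using N(2) by blast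
    then show "?c \<in> A \<inter> centralizer G {x, y}"
      using x y G by (auto simp: centralizer_def)
  qed
  then have "?H \<subseteq> centralizer G ?H" by (auto simp: centralizer_def)
  then show ?thesis
    using maximal_abelian_normal_subgroup_absorbs[OF A(1)] normal_subgroup_intersect[OF N(1) C(2)]
    by blast
qed

theorem lemma16:
  fixes G :: "('a, 'b) monoid_scheme" and l :: "'a \<Rightarrow> real" and A :: "'a set"
  assumes "group G" and "solvable G"
    and "length_function G l" and "purely_positive G l"
    and "maximal_abelian_normal_subgroup G A"
    and "torsion_free_subset G A"
  shows "centralizer G A = A"
proof -
  interpret group G by fact
  note nA = maximal_abelian_normal_subgroupD(1)[OF assms(5)]
    and abA = maximal_abelian_normal_subgroupD(2)[OF assms(5)]
  obtain n where n: "(derived G ^^ n) (carrier G) = {\<one>\<^bsub>G\<^esub>}"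
    using assms(2) solvable_iff_trivial_derived_seq by blast
  have "(derived G ^^ k) (carrier G) \<inter> centralizer G A \<subseteq> A" if "k \<le> n" for k
    using that
  proof (induction k rule: inc_induct)
    case base
    show ?case using n normal.axioms(1)[OF nA] subgroup.one_closed by auto
  next
    case (step k)
    then show ?case
      using Int_centralizer_subset_if_derived[OF assms(3-6) derived_series_normal] by simp
  qed
  from this[of 0] have "centralizer G A \<subseteq> A" by (auto simp: centralizer_def)
  with abA show ?thesis by blast
qed

end
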